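(* Let $\mathcal{A}$ be the free associative $\mathbb{C}$-algebra on two noncommuting generators $L$ and $R$, let $S=\{FG-GF : F,G \text{ nonempty balanced words}\}$, and let $\mathcal{J}$ be the two-sided ideal of $\mathcal{A}$ generated by $S$. Let $\Upsilon$ be the set of equivalence classes (under $\sim$) of upper primes and $\Lambda$ the set of equivalence classes of lower primes. For each $\upsilon\in\Upsilon$ choose an arbitrary representative $U_\upsilon\in\upsilon$, and for each $\lambda\in\Lambda$ choose an arbitrary representative $D_\lambda\in\lambda$. Define $$S'''=\{U_\upsilon D_\lambda-D_\lambda U_\upsilon : \upsilon\in\Upsilon,\ \lambda\in\Lambda\}.$$ Then $S'''\subseteq S$, $S'''$ generates $\mathcal{J}$ as a two-sided ideal, and no proper subset of $S'''$ generates $\mathcal{J}$.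
   Context: Words are finite products of the letters $L,R$ (the empty word is allowed and is the identity); the words form a $\mathbb{C}$-basis of $\mathcal{A}$. A word is balanced if it contains equally many $L$'s and $R$'s. For words $X,Y$ write $X\sim Y$ if $X-Y\in\mathcal{J}$; this is an equivalence relation on words. A word is prime if it is nonempty, balanced, and cannot be written as a product of two nonempty balanced words. For a balanced word $W=a_1\cdots a_n$ and $0\le k\le n$, its $k$-th elevation is $e_k(W)=\sum_{i=1}^k \overline{a_i}$, where $\overline{R}=1$, $\overline{L}=-1$. A prime word $P$ is an upper prime if $e_k(P)>0$ for all $1\le k\le l(P)-1$, and a lower prime if $e_k(P)<0$ for all $1\le k\le l(P)-1$ (every prime is exactly one of these), where $l(P)$ is the length of $P$. *)

theory Defs
  imports Complex_Main "HOL-Library.Poly_Mapping"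
begin

datatype letter = L | R

text \<open>Wrapper type for words, so that concatenation can serve as the monoid
  structure of the exponents of the free monoid algebra.\<close>
datatype word = Word "letter list"

fun word_list :: "word \<Rightarrow> letter list" where
  "word_list (Word xs) = xs"

instantiation word :: monoid_add
begin
definition zero_word :: word where "zero_word = Word []"
definition plus_word :: "word \<Rightarrow> word \<Rightarrow> word" where
  "plus_word u v = Word (word_list u @ word_list v)"
instance
proof
  fix a b c :: word
  show "a + b + c = a + (b + c)"
    by (cases a; cases b; cases c) (simp add: plus_word_def)
  show "0 + a = a" by (cases a) (simp add: plus_word_def zero_word_def)
  show "a + 0 = a" by (cases a) (simp add: plus_word_def zero_word_def)
qed
end

text \<open>Finitely supported complex coefficient functions on words, with the
  convolution product of the monoid algebra (Poly_Mapping): this is the free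
  associative \<complex>-algebra on L, R.\<close>
type_synonym alg = "word \<Rightarrow>\<^sub>0 complex"

definition mon :: "letter list \<Rightarrow> alg" where
  "mon w = Poly_Mapping.single (Word w) 1"

inductive_set gen_ideal :: "alg set \<Rightarrow> alg set" for T :: "alg set" where
  base: "s \<in> T \<Longrightarrow> s \<in> gen_ideal T"
| zero: "0 \<in> gen_ideal T"
| add: "x \<in> gen_ideal T \<Longrightarrow> y \<in> gen_ideal T \<Longrightarrow> x + y \<in> gen_ideal T"
| mult: "x \<in> gen_ideal T \<Longrightarrow> a * x * b \<in> gen_ideal T"

definition balanced :: "letter list \<Rightarrow> bool" where
  "balanced w \<longleftrightarrow> count_list w L = count_list w R"

definition S_set :: "alg set" where
  "S_set = {mon F * mon G - mon G * mon F | F G.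
              F \<noteq> [] \<and> balanced F \<and> G \<noteq> [] \<and> balanced G}"

definition J :: "alg set" where
  "J = gen_ideal S_set"

definition word_equiv :: "letter list \<Rightarrow> letter list \<Rightarrow> bool" (infix "\<sim>\<^sub>J" 50) where
  "X \<sim>\<^sub>J Y \<longleftrightarrow> mon X - mon Y \<in> J"

definition prime_word :: "letter list \<Rightarrow> bool" where
  "prime_word P \<longleftrightarrow> P \<noteq> [] \<and> balanced P \<and>
     \<not> (\<exists>A B. A \<noteq> [] \<and> B \<noteq> [] \<and> balanced A \<and> balanced B \<and> P = A @ B)"

definition bar :: "letter \<Rightarrow> int" where
  "bar a = (case a of R \<Rightarrow> 1 | L \<Rightarrow> -1)"

definition elevation :: "nat \<Rightarrow> letter list \<Rightarrow> int" where
  "elevation k W = (\<Sum>i<k. bar (W ! i))"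

definition upper_prime :: "letter list \<Rightarrow> bool" where
  "upper_prime P \<longleftrightarrow> prime_word P \<and> (\<forall>k. 1 \<le> k \<and> k \<le> length P - 1 \<longrightarrow> elevation k P > 0)"

definition lower_prime :: "letter list \<Rightarrow> bool" where
  "lower_prime P \<longleftrightarrow> prime_word P \<and> (\<forall>k. 1 \<le> k \<and> k \<le> length P - 1 \<longrightarrow> elevation k P < 0)"

definition eq_class :: "letter list \<Rightarrow> letter list set" where
  "eq_class X = {Y. X \<sim>\<^sub>J Y}"

definition Upsilon :: "letter list set set" where
  "Upsilon = {eq_class X | X. upper_prime X}"

definition Lambda :: "letter list set set" where
  "Lambda = {eq_class X | X. lower_prime X}"

end

theory Submission
  imports Defs
begin

text \<open>
  Let the height of a word be its number of R's minus its number of L's. A nonempty balanced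
  word is an upper (lower) prime iff all its proper prefixes have positive (negative) height,
  and swapping two adjacent nonempty balanced factors does not change the set of heights of
  proper prefixes; hence \<open>\<sim>\<close> preserves upper and lower primes.

  Generation: by induction on \<open>|F| + |G|\<close>, the relation \<open>FG = GF\<close> modulo the ideal generated
  by the commutators of representatives follows from shorter such relations: split a composite
  factor; if \<open>F = RXL\<close> and \<open>G = RYL\<close> are upper primes, move \<open>X\<close>, \<open>Y\<close> and \<open>LR\<close> past each
  other (dually for lower primes); if \<open>F\<close> is upper and \<open>G\<close> lower, replace them by their
  representatives, which only needs relations shorter than \<open>FG\<close>.

  Irredundance: if a set \<open>C\<close> of words is preserved by rewriting with every relation of \<open>T\<close>
  inside any context, summing the coefficients of the words in \<open>C\<close> is a linear functional
  vanishing on the ideal generated by \<open>T\<close>. Without the commutator of \<open>(U\<^sub>0, D\<^sub>0)\<close>, the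
  words \<open>UD\<close> with \<open>U \<sim> U\<^sub>0\<close> and \<open>D \<sim> D\<^sub>0\<close> form such a set, since the only pair of adjacent
  balanced factors straddling the cut of \<open>UD\<close> is \<open>(U, D)\<close> itself. It contains \<open>U\<^sub>0D\<^sub>0\<close>
  but not \<open>D\<^sub>0U\<^sub>0\<close>, which begins with L.
\<close>

section \<open>Heights and prime words\<close>

definition height :: "letter list \<Rightarrow> int" where
  "height w = int (count_list w R) - int (count_list w L)"

lemma height_simps [simp]:
  "height [] = 0" "height (a # w) = bar a + height w" "height (v @ w) = height v + height w"
  by (auto simp: height_def bar_def split: letter.splits)

lemma bar_cases: "bar a = 1 \<or> bar a = -1"
  by (cases a) (simp_all add: bar_def)

lemma balanced_iff_height: "balanced w \<longleftrightarrow> height w = 0"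
  by (auto simp: balanced_def height_def)

lemma elevation_eq_height_take: "k \<le> length W \<Longrightarrow> elevation k W = height (take k W)"
proof (induction k)
  case (Suc k)
  then have "take (Suc k) W = take k W @ [W ! k]"
    by (simp add: take_Suc_conv_app_nth)
  with Suc show ?case
    by (simp add: elevation_def)
qed (simp add: elevation_def)

lemma two_le_length_balanced: "balanced w \<Longrightarrow> w \<noteq> [] \<Longrightarrow> 2 \<le> length w"
  by (cases w; cases "tl w") (auto simp: balanced_iff_height bar_def split: letter.splits)

definition prefixes_signed :: "int \<Rightarrow> letter list \<Rightarrow> bool" where
  "prefixes_signed s W \<longleftrightarrow> (\<forall>k. 0 < k \<and> k < length W \<longrightarrow> 0 < s * height (take k W))"

lemma prime_word_signed_iff:
  "(prime_word W \<and> (\<forall>k. 1 \<le> k \<and> k \<le> length W - 1 \<longrightarrow> 0 < s * elevation k W))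
    \<longleftrightarrow> W \<noteq> [] \<and> balanced W \<and> prefixes_signed s W"
proof -
  have "(\<forall>k. 1 \<le> k \<and> k \<le> length W - 1 \<longrightarrow> 0 < s * elevation k W) \<longleftrightarrow> prefixes_signed s W"
    unfolding prefixes_signed_def
    by (intro iff_allI) (auto simp: elevation_eq_height_take)
  moreover have "prime_word W"
    if "W \<noteq> []" "balanced W" "prefixes_signed s W"
  proof -
    have "\<not> balanced (take k W)" if "0 < k" "k < length W" for k
      using \<open>prefixes_signed s W\<close> that by (auto simp: prefixes_signed_def balanced_iff_height)
    then show ?thesis
      using that(1,2) by (fastforce simp: prime_word_def)
  qed
  ultimately show ?thesis
    by (auto simp: prime_word_def)
qed

lemma upper_prime_iff: "upper_prime W \<longleftrightarrow> W \<noteq> [] \<and> balanced W \<and> prefixes_signed 1 W"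
  using prime_word_signed_iff[of W 1] by (simp add: upper_prime_def)

lemma lower_prime_iff: "lower_prime W \<longleftrightarrow> W \<noteq> [] \<and> balanced W \<and> prefixes_signed (-1) W"
  using prime_word_signed_iff[of W "-1"] by (simp add: lower_prime_def)

lemma prefixes_signed_swap:
  assumes signed: "prefixes_signed s (a @ F @ G @ b)" and "balanced F" "balanced G"
  shows "prefixes_signed s (a @ G @ F @ b)"
proof (cases "F = [] \<or> G = []")
  case True
  with signed show ?thesis by auto
next
  case False
  have hF: "height F = 0" and hG: "height G = 0"
    using \<open>balanced F\<close> \<open>balanced G\<close> by (simp_all add: balanced_iff_height)
  show ?thesis unfolding prefixes_signed_def
  proof (intro allI impI)
    fix k assume k: "0 < k \<and> k < length (a @ G @ F @ b)"
    have "\<exists>k'. 0 < k' \<and> k' < length (a @ F @ G @ b) \<and>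
        height (take k' (a @ F @ G @ b)) = height (take k (a @ G @ F @ b))"
    proof -
      consider "k \<le> length a"
        | "length a < k \<and> k < length a + length G"
        | "k = length a + length G"
        | "length a + length G < k \<and> k < length a + length G + length F"
        | "length a + length G + length F \<le> k"
        by linarith
      then show ?thesis
      proof cases
        case 1 with k False show ?thesis by (intro exI[of _ k]) auto
      next
        case 2 with k False hF hG show ?thesis by (intro exI[of _ "k + length F"]) auto
      next
        case 3 with k False hF hG show ?thesis by (intro exI[of _ "length a + length F"]) auto
      next
        case 4 with k False hF hG show ?thesis by (intro exI[of _ "k - length G"]) (auto simp: algebra_simps)
      next
        case 5 with k False hF hG show ?thesis by (intro exI[of _ k]) (auto simp: algebra_simps)
      qed
    qed
    then obtain k' where "0 < k' \<and> k' < length (a @ F @ G @ b)"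
      "height (take k' (a @ F @ G @ b)) = height (take k (a @ G @ F @ b))"
      by blast
    with signed show "0 < s * height (take k (a @ G @ F @ b))"
      unfolding prefixes_signed_def by metis
  qed
qed

lemma sign_of_height_take_persists:
  assumes nonzero: "\<And>j. 0 < j \<Longrightarrow> j \<le> m \<Longrightarrow> height (take j W) \<noteq> 0"
    and "0 < m" "m \<le> length W"
  shows "0 < bar (hd W) * height (take m W)"
  using assms
proof (induction m)
  case (Suc m)
  show ?case
  proof (cases "m = 0")
    case True
    moreover have "take 1 W = [hd W]"
      using Suc.prems by (cases W) auto
    ultimately show ?thesis
      using bar_cases[of "hd W"] by auto
  next
    case False
    have IH: "0 < bar (hd W) * height (take m W)"
      by (rule Suc.IH) (use Suc.prems False in auto)
    have "take (Suc m) W = take m W @ [W ! m]"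
      using Suc.prems by (simp add: take_Suc_conv_app_nth)
    then have step: "height (take (Suc m) W) = height (take m W) + bar (W ! m)"
      by simp
    have "height (take (Suc m) W) \<noteq> 0"
      using Suc.prems by simp
    with IH step bar_cases[of "hd W"] bar_cases[of "W ! m"] show ?thesis
      by (elim disjE) simp_all
  qed
qed simp

lemma prime_word_upper_or_lower:
  assumes "prime_word P"
  shows "upper_prime P \<or> lower_prime P"
proof -
  have P: "P \<noteq> []" "balanced P"
    using assms by (simp_all add: prime_word_def)
  have "height (take j P) \<noteq> 0" if "0 < j" "j < length P" for j
  proof
    assume "height (take j P) = 0"
    moreover have "height (take j P) + height (drop j P) = 0"
      using P(2) by (metis append_take_drop_id balanced_iff_height height_simps(3))
    ultimately have "balanced (take j P)" "balanced (drop j P)"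
      by (simp_all add: balanced_iff_height)
    moreover have "take j P \<noteq> []" "drop j P \<noteq> []" "P = take j P @ drop j P"
      using that by auto
    ultimately show False
      using assms unfolding prime_word_def by blast
  qed
  then have "prefixes_signed (bar (hd P)) P"
    unfolding prefixes_signed_def by (auto intro: sign_of_height_take_persists)
  with P show ?thesis
    unfolding upper_prime_iff lower_prime_iff by (cases "hd P") (auto simp: bar_def)
qed

lemma signed_word_shape:
  assumes "W \<noteq> []" "balanced W" "prefixes_signed s W"
  obtains a X b where "W = a # X @ [b]" "balanced X" "0 < s * bar a" "s * bar b < 0"
proof -
  obtain a W' where W': "W = a # W'"
    using assms(1) by (cases W) auto
  with two_le_length_balanced[OF assms(2,1)] have "W' \<noteq> []"
    by auto
  then obtain X b where W: "W = a # X @ [b]"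
    using W' by (cases W' rule: rev_cases) auto
  have prefix: "0 < s * height (take k W)" if "0 < k" "k < length W" for k
    using assms(3) that unfolding prefixes_signed_def by blast
  have "0 < s * bar a"
    using prefix[of 1] W by simp
  moreover have "0 < s * (bar a + height X)"
    using prefix[of "length W - 1"] W by simp
  moreover have hX: "height X = - bar a - bar b"
    using assms(2) W by (simp add: balanced_iff_height)
  moreover have "s * (bar a + height X) = - (s * bar b)"
    by (simp add: hX algebra_simps)
  ultimately have "s * bar b < 0"
    by linarith
  with \<open>0 < s * bar a\<close> have "bar a \<noteq> bar b"
    by auto
  then have "balanced X"
    using bar_cases[of a] bar_cases[of b] by (auto simp: balanced_iff_height hX)
  with W \<open>0 < s * bar a\<close> \<open>s * bar b < 0\<close> show thesis
    using that by blast
qed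

lemma upper_prime_shape:
  assumes "upper_prime P"
  obtains X where "P = R # X @ [L]" "balanced X"
proof -
  obtain a X b where "P = a # X @ [b]" "balanced X" "0 < 1 * bar a" "1 * bar b < 0"
    using assms signed_word_shape[of P "1"] unfolding upper_prime_iff by blast
  with that show thesis
    by (cases a; cases b) (auto simp: bar_def)
qed

lemma lower_prime_shape:
  assumes "lower_prime P"
  obtains X where "P = L # X @ [R]" "balanced X"
proof -
  obtain a X b where "P = a # X @ [b]" "balanced X" "0 < -1 * bar a" "-1 * bar b < 0"
    using assms signed_word_shape[of P "-1"] unfolding lower_prime_iff by blast
  with that show thesis
    by (cases a; cases b) (auto simp: bar_def)
qed

section \<open>Congruence modulo a generated ideal\<close>

lemma word_list_plus [simp]: "word_list (u + v) = word_list u @ word_list v"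
  by (simp add: plus_word_def)

lemma mon_append: "mon X * mon Y = mon (X @ Y)"
  by (simp add: mon_def mult_single plus_word_def)

lemma gen_ideal_uminus: "x \<in> gen_ideal T \<Longrightarrow> - x \<in> gen_ideal T"
  using gen_ideal.mult[of x T "-1" 1] by simp

lemma gen_ideal_minimal:
  assumes "T \<subseteq> gen_ideal S"
  shows "gen_ideal T \<subseteq> gen_ideal S"
proof
  fix x assume "x \<in> gen_ideal T"
  then show "x \<in> gen_ideal S"
    by induction (use assms in \<open>auto intro: gen_ideal.intros\<close>)
qed

definition mod_equiv :: "alg set \<Rightarrow> letter list \<Rightarrow> letter list \<Rightarrow> bool" where
  "mod_equiv T X Y \<longleftrightarrow> mon X - mon Y \<in> gen_ideal T"

lemma mod_equiv_refl: "mod_equiv T X X"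
  by (simp add: mod_equiv_def gen_ideal.zero)

lemma mod_equiv_sym: "mod_equiv T X Y \<Longrightarrow> mod_equiv T Y X"
  unfolding mod_equiv_def using gen_ideal_uminus by fastforce

lemma mod_equiv_trans: "mod_equiv T X Y \<Longrightarrow> mod_equiv T Y Z \<Longrightarrow> mod_equiv T X Z"
  unfolding mod_equiv_def using gen_ideal.add by fastforce

lemma mod_equiv_append:
  assumes "mod_equiv T X Y"
  shows "mod_equiv T (a @ X @ b) (a @ Y @ b)"
proof -
  have "mon a * (mon X - mon Y) * mon b \<in> gen_ideal T"
    using assms unfolding mod_equiv_def by (rule gen_ideal.mult)
  then show ?thesis
    by (simp add: mod_equiv_def algebra_simps mon_append)
qed

lemma word_equiv_iff_mod_equiv: "X \<sim>\<^sub>J Y \<longleftrightarrow> mod_equiv S_set X Y"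
  by (simp add: word_equiv_def mod_equiv_def J_def)

definition coeff_sum :: "letter list set \<Rightarrow> alg \<Rightarrow> complex" where
  "coeff_sum C p = (\<Sum>w\<in>Poly_Mapping.keys p. if word_list w \<in> C then Poly_Mapping.lookup p w else 0)"

lemma coeff_sum_superset:
  assumes "finite K" "Poly_Mapping.keys p \<subseteq> K"
  shows "coeff_sum C p = (\<Sum>w\<in>K. if word_list w \<in> C then Poly_Mapping.lookup p w else 0)"
  unfolding coeff_sum_def using assms
  by (intro sum.mono_neutral_left) (auto simp: in_keys_iff)

lemma coeff_sum_add: "coeff_sum C (p + q) = coeff_sum C p + coeff_sum C q"
proof -
  let ?K = "Poly_Mapping.keys p \<union> Poly_Mapping.keys q"
  have "coeff_sum C (p + q) = (\<Sum>w\<in>?K. if word_list w \<in> C then Poly_Mapping.lookup (p + q) w else 0)"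
    by (rule coeff_sum_superset) (use keys_add[of p q] in auto)
  also have "\<dots> = (\<Sum>w\<in>?K. if word_list w \<in> C then Poly_Mapping.lookup p w else 0)
      + (\<Sum>w\<in>?K. if word_list w \<in> C then Poly_Mapping.lookup q w else 0)"
    unfolding sum.distrib[symmetric] by (intro sum.cong) (auto simp: lookup_add)
  also have "\<dots> = coeff_sum C p + coeff_sum C q"
    by (subst (1 2) coeff_sum_superset[of ?K]) auto
  finally show ?thesis .
qed

lemma coeff_sum_zero [simp]: "coeff_sum C 0 = 0"
  by (simp add: coeff_sum_def)

lemma coeff_sum_diff: "coeff_sum C (p - q) = coeff_sum C p - coeff_sum C q"
  using coeff_sum_add[of C "p - q" q] by simp

lemma coeff_sum_single:
  "coeff_sum C (Poly_Mapping.single w c) = (if word_list w \<in> C then c else 0)"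
  by (subst coeff_sum_superset[of "{w}"]) auto

lemma coeff_sum_mon: "coeff_sum C (mon X) = (if X \<in> C then 1 else 0)"
  by (simp add: mon_def coeff_sum_single)

lemma poly_mapping_single_induct:
  assumes "P 0" "\<And>p w c. P p \<Longrightarrow> P (p + Poly_Mapping.single w c)"
  shows "P (p :: alg)"
proof (induction p rule: update_induct)
  case (update p w c)
  have "Poly_Mapping.update w c p = p + Poly_Mapping.single w c"
    using update.hyps
    by (intro poly_mapping_eqI) (auto simp: lookup_update lookup_add lookup_single in_keys_iff when_def)
  with assms update show ?case
    by simp
qed (use assms in simp)

definition invariant_under :: "alg set \<Rightarrow> letter list set \<Rightarrow> bool" where
  "invariant_under T C \<longleftrightarrow>
     (\<forall>t\<in>T. \<exists>X Y. t = mon X - mon Y \<and> (\<forall>a b. a @ X @ b \<in> C \<longleftrightarrow> a @ Y @ b \<in> C))"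

lemma coeff_sum_mult_relation:
  assumes XY: "\<And>a b. a @ X @ b \<in> C \<longleftrightarrow> a @ Y @ b \<in> C"
  shows "coeff_sum C (p * (mon X - mon Y) * q) = 0"
proof -
  have single: "coeff_sum C (Poly_Mapping.single v c * (mon X - mon Y) * Poly_Mapping.single w d) = 0"
    for v w c d
    using XY[of "word_list v" "word_list w"]
    by (simp add: mon_def algebra_simps mult_single coeff_sum_diff coeff_sum_single)
  have "coeff_sum C (Poly_Mapping.single v c * (mon X - mon Y) * q) = 0" for v c
    by (induction q rule: poly_mapping_single_induct)
      (simp_all add: distrib_left coeff_sum_add single)
  then show ?thesis
    by (induction p rule: poly_mapping_single_induct)
      (simp_all add: distrib_right coeff_sum_add)
qed

lemma coeff_sum_gen_ideal:
  assumes "invariant_under T C" "p \<in> gen_ideal T"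
  shows "coeff_sum C p = 0"
proof -
  have "\<forall>a b. coeff_sum C (a * p * b) = 0"
    using assms(2)
  proof (induction rule: gen_ideal.induct)
    case (base t)
    with assms(1) show ?case
      unfolding invariant_under_def by (metis coeff_sum_mult_relation)
  next
    case (add x y)
    then show ?case
      by (simp add: distrib_left distrib_right coeff_sum_add)
  next
    case (mult x a' b')
    then show ?case
      by (metis mult.assoc)
  qed simp
  then show ?thesis
    by (metis mult_1 mult_1_right)
qed

lemma mod_equiv_invariant_under:
  assumes "invariant_under T C" "mod_equiv T X Y" "X \<in> C"
  shows "Y \<in> C"
  using coeff_sum_gen_ideal[OF assms(1) assms(2)[unfolded mod_equiv_def]] assms(3)
  by (simp add: coeff_sum_diff coeff_sum_mon split: if_splits)

lemma word_equiv_refl: "X \<sim>\<^sub>J X"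
  by (simp add: word_equiv_iff_mod_equiv mod_equiv_refl)

lemma word_equiv_sym: "X \<sim>\<^sub>J Y \<Longrightarrow> Y \<sim>\<^sub>J X"
  by (simp add: word_equiv_iff_mod_equiv mod_equiv_sym)

lemma word_equiv_trans: "X \<sim>\<^sub>J Y \<Longrightarrow> Y \<sim>\<^sub>J Z \<Longrightarrow> X \<sim>\<^sub>J Z"
  unfolding word_equiv_iff_mod_equiv by (rule mod_equiv_trans)

lemma eq_class_eqI: "X \<sim>\<^sub>J Y \<Longrightarrow> eq_class X = eq_class Y"
  unfolding eq_class_def using word_equiv_sym word_equiv_trans by blast

lemma S_set_swap: "F \<noteq> [] \<Longrightarrow> G \<noteq> [] \<Longrightarrow> balanced F \<Longrightarrow> balanced G \<Longrightarrow> mon (F @ G) - mon (G @ F) \<in> S_set"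
  by (auto simp: S_set_def mon_append)

lemma word_equiv_swap:
  assumes "F \<noteq> []" "G \<noteq> []" "balanced F" "balanced G"
  shows "a @ F @ G @ b \<sim>\<^sub>J a @ G @ F @ b"
proof -
  have "mod_equiv S_set (F @ G) (G @ F)"
    unfolding mod_equiv_def by (rule gen_ideal.base) (rule S_set_swap[OF assms])
  then show ?thesis
    unfolding word_equiv_iff_mod_equiv using mod_equiv_append by fastforce
qed

lemma word_equiv_preserves_swap_closed:
  assumes swap: "\<And>a b F G. F \<noteq> [] \<Longrightarrow> G \<noteq> [] \<Longrightarrow> balanced F \<Longrightarrow> balanced G \<Longrightarrow>
      a @ F @ G @ b \<in> C \<Longrightarrow> a @ G @ F @ b \<in> C"
    and "X \<sim>\<^sub>J Y" "X \<in> C"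
  shows "Y \<in> C"
proof (rule mod_equiv_invariant_under)
  show "invariant_under S_set C"
    unfolding invariant_under_def S_set_def
    by (auto simp: mon_append intro: swap) (metis append_assoc swap)+
qed (use assms(2,3) in \<open>simp_all add: word_equiv_iff_mod_equiv\<close>)

lemma upper_prime_word_equiv: "X \<sim>\<^sub>J Y \<Longrightarrow> upper_prime X \<Longrightarrow> upper_prime Y"
  using word_equiv_preserves_swap_closed[of "{W. upper_prime W}" X Y] prefixes_signed_swap
  unfolding upper_prime_iff by (auto simp: balanced_iff_height)

lemma lower_prime_word_equiv: "X \<sim>\<^sub>J Y \<Longrightarrow> lower_prime X \<Longrightarrow> lower_prime Y"
  using word_equiv_preserves_swap_closed[of "{W. lower_prime W}" X Y] prefixes_signed_swap
  unfolding lower_prime_iff by (auto simp: balanced_iff_height)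

lemma Upsilon_memberD: "ups \<in> Upsilon \<Longrightarrow> X \<in> ups \<Longrightarrow> upper_prime X \<and> ups = eq_class X"
  unfolding Upsilon_def eq_class_def using upper_prime_word_equiv eq_class_eqI[unfolded eq_class_def]
  by blast

lemma Lambda_memberD: "lam \<in> Lambda \<Longrightarrow> X \<in> lam \<Longrightarrow> lower_prime X \<and> lam = eq_class X"
  unfolding Lambda_def eq_class_def using lower_prime_word_equiv eq_class_eqI[unfolded eq_class_def]
  by blast

section \<open>Words of the form \<open>UD\<close>\<close>

lemma height_take_upper_lower:
  assumes "upper_prime U" "lower_prime D"
  shows "0 < k \<Longrightarrow> k < length U \<Longrightarrow> 0 < height (take k (U @ D))"
    and "length U < k \<Longrightarrow> k < length U + length D \<Longrightarrow> height (take k (U @ D)) < 0"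
    and "k = length U \<or> length U + length D \<le> k \<Longrightarrow> height (take k (U @ D)) = 0"
  using assms unfolding upper_prime_iff lower_prime_iff prefixes_signed_def
  by (auto simp: balanced_iff_height)

text \<open>The prefix heights of \<open>U @ D\<close> are positive inside \<open>U\<close>, negative inside \<open>D\<close> and zero
  exactly at the ends of \<open>U\<close> and \<open>D\<close>, while the cut points \<open>|a|\<close>, \<open>|aF|\<close>, \<open>|aFG|\<close> all have the height
  of \<open>a\<close>.\<close>

lemma balanced_factors_across_upper_lower:
  assumes W: "a @ F @ G @ b = U @ D" and U: "upper_prime U" and D: "lower_prime D"
    and F: "F \<noteq> []" "balanced F" and G: "G \<noteq> []" "balanced G"
    and across: "length a < length U" "length U < length (a @ F @ G)"
  shows "a = [] \<and> F = U \<and> G = D \<and> b = []"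
proof -
  let ?h = "\<lambda>k. height (take k (U @ D))"
  note profile = height_take_upper_lower[OF U D]
  have total: "length (a @ F @ G) \<le> length U + length D"
    using arg_cong[OF W, of length] by simp
  have h: "?h (length a) = height a" "?h (length (a @ F)) = height a" "?h (length (a @ F @ G)) = height a"
    using F(2) G(2) unfolding W[symmetric] by (simp_all add: balanced_iff_height)
  have "0 \<le> height a"
    using profile(1)[of "length a"] h(1) across(1) by (cases "a = []") auto
  moreover have "height a \<le> 0"
    using profile(2,3)[of "length (a @ F @ G)"] h(3) across(2) total by fastforce
  ultimately have h0: "height a = 0"
    by simp
  then have "a = []"
    using profile(1)[of "length a"] h(1) across(1) by auto
  moreover have "length (a @ F @ G) = length U + length D"
    using profile(2)[of "length (a @ F @ G)"] h(3) h0 across(2) total by fastforce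
  moreover have "0 < length (a @ F)" "length (a @ F) < length U + length D"
    using F(1) G(1) calculation by (cases F; cases G; simp)+
  moreover have "length (a @ F) = length U"
    using profile(1,2)[of "length (a @ F)"] h(2) h0 calculation
    by (cases "length (a @ F)" "length U" rule: linorder_cases) auto
  ultimately show ?thesis
    using W by (auto simp: append_eq_append_conv)
qed

lemma balanced_factors_in_upper_lower:
  assumes W: "a @ F @ G @ b = U @ D" and U: "upper_prime U" and D: "lower_prime D"
    and F: "F \<noteq> []" "balanced F" and G: "G \<noteq> []" "balanced G"
  shows "(\<exists>c. U = a @ F @ G @ c \<and> b = c @ D) \<or> (\<exists>c. D = c @ F @ G @ b \<and> a = U @ c)
    \<or> (a = [] \<and> F = U \<and> G = D \<and> b = [])"
proof -
  from W have "(a @ F @ G) @ b = U @ D"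
    by simp
  then consider (in_U) c where "U = a @ F @ G @ c" "b = c @ D"
    | (ends_in_D) d where "a @ F @ G = U @ d" "D = d @ b"
    unfolding append_eq_append_conv2 by auto
  then show ?thesis
  proof cases
    case ends_in_D
    from ends_in_D(1) consider (in_D) c where "a = U @ c" "d = c @ F @ G"
      | (across) c where "U = a @ c" "F @ G = c @ d"
      unfolding append_eq_append_conv2 by auto
    then show ?thesis
    proof cases
      case in_D
      with ends_in_D show ?thesis
        by auto
    next
      case across
      consider "c = []" | "d = []" | "c \<noteq> []" "d \<noteq> []"
        by blast
      then show ?thesis
      proof cases
        case 1
        with across ends_in_D show ?thesis by auto
      next
        case 2
        with across ends_in_D show ?thesis by auto
      next
        case 3
        with across ends_in_D have "length a < length U" "length U < length (a @ F @ G)"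
          by (auto dest: arg_cong[of _ _ length])
        from balanced_factors_across_upper_lower[OF W U D F G this] show ?thesis
          by blast
      qed
    qed
  qed blast
qed

lemma upper_prime_hd: "upper_prime P \<Longrightarrow> hd P = R"
  by (metis upper_prime_shape list.sel(1))

lemma lower_prime_hd: "lower_prime P \<Longrightarrow> hd P = L"
  by (metis lower_prime_shape list.sel(1))

lemma upper_prime_not_lower: "upper_prime P \<Longrightarrow> \<not> lower_prime P"
  using upper_prime_hd lower_prime_hd by force

definition class_product :: "letter list \<Rightarrow> letter list \<Rightarrow> letter list set" where
  "class_product U0 D0 = {U @ D | U D. U \<sim>\<^sub>J U0 \<and> D \<sim>\<^sub>J D0}"

lemma class_product_swap:
  assumes U0: "upper_prime U0" and D0: "lower_prime D0"
    and W: "a @ F @ G @ b \<in> class_product U0 D0"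
    and F: "F \<noteq> []" "balanced F" and G: "G \<noteq> []" "balanced G"
    and other: "\<not> (F \<sim>\<^sub>J U0 \<and> G \<sim>\<^sub>J D0)"
  shows "a @ G @ F @ b \<in> class_product U0 D0"
proof -
  obtain U D where UD: "a @ F @ G @ b = U @ D" "U \<sim>\<^sub>J U0" "D \<sim>\<^sub>J D0"
    using W by (auto simp: class_product_def)
  have "upper_prime U" "lower_prime D"
    using UD(2,3) U0 D0 upper_prime_word_equiv lower_prime_word_equiv word_equiv_sym by blast+
  from balanced_factors_in_upper_lower[OF UD(1) this F G] other UD(2,3) consider
      (in_U) c where "U = a @ F @ G @ c" "b = c @ D"
    | (in_D) c where "D = c @ F @ G @ b" "a = U @ c"
    by blast
  then show ?thesis
  proof cases
    case in_U
    with word_equiv_swap[OF F(1) G(1) F(2) G(2), of a c] UD(2) have "a @ G @ F @ c \<sim>\<^sub>J U0"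
      by (blast intro: word_equiv_sym word_equiv_trans)
    with in_U UD(3) show ?thesis
      unfolding class_product_def by (intro CollectI exI[of _ "a @ G @ F @ c"] exI[of _ D]) simp
  next
    case in_D
    with word_equiv_swap[OF F(1) G(1) F(2) G(2), of c b] UD(3) have "c @ G @ F @ b \<sim>\<^sub>J D0"
      by (blast intro: word_equiv_sym word_equiv_trans)
    with in_D UD(2) show ?thesis
      unfolding class_product_def by (intro CollectI exI[of _ U] exI[of _ "c @ G @ F @ b"]) simp
  qed
qed

lemma swap_not_generated_by_other_swaps:
  assumes U0: "upper_prime U0" and D0: "lower_prime D0"
    and T: "T \<subseteq> {mon (P @ Q) - mon (Q @ P) | P Q.
      upper_prime P \<and> lower_prime Q \<and> \<not> (P \<sim>\<^sub>J U0 \<and> Q \<sim>\<^sub>J D0)}"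
  shows "\<not> mod_equiv T (U0 @ D0) (D0 @ U0)"
proof
  let ?C = "class_product U0 D0"
  have "invariant_under T ?C"
    unfolding invariant_under_def
  proof
    fix t assume "t \<in> T"
    with T obtain P Q where t: "t = mon (P @ Q) - mon (Q @ P)" and P: "upper_prime P" and Q: "lower_prime Q"
      and other: "\<not> (P \<sim>\<^sub>J U0 \<and> Q \<sim>\<^sub>J D0)"
      by blast
    have "\<not> (Q \<sim>\<^sub>J U0 \<and> P \<sim>\<^sub>J D0)"
      using Q U0 upper_prime_word_equiv word_equiv_sym upper_prime_not_lower by blast
    moreover have "P \<noteq> []" "balanced P" "Q \<noteq> []" "balanced Q"
      using P Q by (simp_all add: upper_prime_iff lower_prime_iff)
    ultimately have "a @ (P @ Q) @ b \<in> ?C \<longleftrightarrow> a @ (Q @ P) @ b \<in> ?C" for a b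
      using class_product_swap[OF U0 D0] other by auto
    with t show "\<exists>X Y. t = mon X - mon Y \<and> (\<forall>a b. a @ X @ b \<in> ?C \<longleftrightarrow> a @ Y @ b \<in> ?C)"
      by blast
  qed
  moreover assume "mod_equiv T (U0 @ D0) (D0 @ U0)"
  moreover have "U0 @ D0 \<in> ?C"
    unfolding class_product_def using word_equiv_refl by blast
  ultimately have "D0 @ U0 \<in> ?C"
    by (rule mod_equiv_invariant_under)
  then obtain U D where "D0 @ U0 = U @ D" "U \<sim>\<^sub>J U0"
    by (auto simp: class_product_def)
  moreover have "upper_prime U"
    using U0 \<open>U \<sim>\<^sub>J U0\<close> upper_prime_word_equiv word_equiv_sym by blast
  moreover have "D0 \<noteq> []" "U \<noteq> []"
    using D0 \<open>upper_prime U\<close> by (simp_all add: lower_prime_iff upper_prime_iff)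
  ultimately show False
    using D0 upper_prime_hd lower_prime_hd by (metis hd_append2 letter.distinct(1))
qed

section \<open>Reducing swaps to shorter ones\<close>

lemma mod_equiv_concat:
  assumes "mod_equiv T X X'" "mod_equiv T Y Y'"
  shows "mod_equiv T (X @ Y) (X' @ Y')"
  using mod_equiv_append[OF assms(1), of "[]" Y] mod_equiv_append[OF assms(2), of X' "[]"]
  by (auto intro: mod_equiv_trans)

lemma mod_equiv_swap_append:
  assumes "mod_equiv T (F2 @ G) (G @ F2)" "mod_equiv T (F1 @ G) (G @ F1)"
  shows "mod_equiv T (F1 @ F2 @ G) (G @ F1 @ F2)"
  using mod_equiv_append[OF assms(1), of F1 "[]"] mod_equiv_append[OF assms(2), of "[]" F2]
  by (auto intro: mod_equiv_trans)

lemma mod_equiv_swap_framed: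
  assumes "mod_equiv T ([b, a] @ Y) (Y @ [b, a])" "mod_equiv T (X @ Y) (Y @ X)"
    and "mod_equiv T (X @ [b, a]) ([b, a] @ X)"
  shows "mod_equiv T (a # X @ b # a # Y @ [b]) (a # Y @ b # a # X @ [b])"
proof -
  have "mod_equiv T (X @ [b, a] @ Y) (Y @ [b, a] @ X)"
    using mod_equiv_append[OF assms(1), of X "[]"] mod_equiv_append[OF assms(2), of "[]" "[b, a]"]
      mod_equiv_append[OF assms(3), of Y "[]"]
    by (auto intro: mod_equiv_trans)
  from mod_equiv_append[OF this, of "[a]" "[b]"] show ?thesis
    by simp
qed

lemma mod_equiv_of_word_equiv:
  assumes swaps: "\<And>F G. balanced F \<Longrightarrow> balanced G \<Longrightarrow> length (F @ G) \<le> length X \<Longrightarrow>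
      mod_equiv T (F @ G) (G @ F)"
    and "X \<sim>\<^sub>J Y"
  shows "mod_equiv T X Y"
proof -
  let ?C = "{Z. length Z = length X \<and> mod_equiv T X Z}"
  have "Y \<in> ?C"
  proof (rule word_equiv_preserves_swap_closed[OF _ \<open>X \<sim>\<^sub>J Y\<close>])
    fix a b F G
    assume "F \<noteq> []" "G \<noteq> []" "balanced F" "balanced G" "a @ F @ G @ b \<in> ?C"
    then have "mod_equiv T (F @ G) (G @ F)"
      by (intro swaps) auto
    from mod_equiv_append[OF this, of a b]
    have "mod_equiv T (a @ F @ G @ b) (a @ G @ F @ b)"
      by simp
    with \<open>a @ F @ G @ b \<in> ?C\<close> show "a @ G @ F @ b \<in> ?C"
      by (auto intro: mod_equiv_trans)
  qed (simp add: mod_equiv_refl)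
  then show ?thesis
    by simp
qed

section \<open>Commutators of representatives\<close>

definition rep_commutators :: "(letter list set \<Rightarrow> letter list) \<Rightarrow> (letter list set \<Rightarrow> letter list) \<Rightarrow> alg set" where
  "rep_commutators U D = {mon (U ups) * mon (D lam) - mon (D lam) * mon (U ups) | ups lam.
     ups \<in> Upsilon \<and> lam \<in> Lambda}"

lemma rep_commutators_eq:
  "rep_commutators U D = {mon (U ups @ D lam) - mon (D lam @ U ups) | ups lam. ups \<in> Upsilon \<and> lam \<in> Lambda}"
  by (simp add: rep_commutators_def mon_append)

context
  fixes U D :: "letter list set \<Rightarrow> letter list"
  assumes U_rep: "\<forall>ups\<in>Upsilon. U ups \<in> ups" and D_rep: "\<forall>lam\<in>Lambda. D lam \<in> lam"
begin

lemma upper_prime_rep: "ups \<in> Upsilon \<Longrightarrow> upper_prime (U ups) \<and> eq_class (U ups) = ups"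
  using U_rep Upsilon_memberD by simp

lemma lower_prime_rep: "lam \<in> Lambda \<Longrightarrow> lower_prime (D lam) \<and> eq_class (D lam) = lam"
  using D_rep Lambda_memberD by simp

lemma mod_equiv_swap_upper_lower:
  assumes gen: "\<And>ups lam. ups \<in> Upsilon \<Longrightarrow> lam \<in> Lambda \<Longrightarrow> mod_equiv T (U ups @ D lam) (D lam @ U ups)"
    and P: "upper_prime P" and Q: "lower_prime Q"
    and shorter: "\<And>F G. balanced F \<Longrightarrow> balanced G \<Longrightarrow> length (F @ G) < length (P @ Q) \<Longrightarrow>
      mod_equiv T (F @ G) (G @ F)"
  shows "mod_equiv T (P @ Q) (Q @ P)"
proof -
  define ups lam where "ups = eq_class P" and "lam = eq_class Q"
  have ups: "ups \<in> Upsilon" and lam: "lam \<in> Lambda"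
    using P Q by (auto simp: Upsilon_def Lambda_def ups_def lam_def)
  have "P \<noteq> []" "Q \<noteq> []"
    using P Q by (simp_all add: upper_prime_iff lower_prime_iff)
  then have "length P < length (P @ Q)" "length Q < length (P @ Q)"
    by (cases P; cases Q; simp)+
  then have swaps: "mod_equiv T (F @ G) (G @ F)"
    if "balanced F" "balanced G" "length (F @ G) \<le> length P \<or> length (F @ G) \<le> length Q" for F G
    by (intro shorter[OF that(1,2)]) (use that(3) in linarith)
  have "U ups \<in> eq_class P" "D lam \<in> eq_class Q"
    using U_rep ups D_rep lam unfolding ups_def lam_def by blast+
  then have "P \<sim>\<^sub>J U ups" "Q \<sim>\<^sub>J D lam"
    by (simp_all add: eq_class_def)
  then have "mod_equiv T P (U ups)" "mod_equiv T Q (D lam)"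
    using mod_equiv_of_word_equiv swaps by blast+
  then have "mod_equiv T (P @ Q) (U ups @ D lam)" "mod_equiv T (D lam @ U ups) (Q @ P)"
    by (simp_all add: mod_equiv_concat mod_equiv_sym)
  with gen[OF ups lam] show ?thesis
    by (blast intro: mod_equiv_trans)
qed

lemma mod_equiv_swap_primes:
  assumes gen: "\<And>ups lam. ups \<in> Upsilon \<Longrightarrow> lam \<in> Lambda \<Longrightarrow> mod_equiv T (U ups @ D lam) (D lam @ U ups)"
    and "prime_word F" "prime_word G"
    and shorter: "\<And>F' G'. balanced F' \<Longrightarrow> balanced G' \<Longrightarrow> length (F' @ G') < length (F @ G) \<Longrightarrow>
      mod_equiv T (F' @ G') (G' @ F')"
  shows "mod_equiv T (F @ G) (G @ F)"
proof -
  have "balanced [L, R]" "balanced [R, L]"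
    by (simp_all add: balanced_def)
  consider "upper_prime F" "upper_prime G" | "upper_prime F" "lower_prime G"
    | "lower_prime F" "upper_prime G" | "lower_prime F" "lower_prime G"
    using prime_word_upper_or_lower assms(2,3) by blast
  then show ?thesis
  proof cases
    case 1
    then obtain X Y where "F = R # X @ [L]" "G = R # Y @ [L]" "balanced X" "balanced Y"
      by (metis upper_prime_shape)
    with \<open>balanced [L, R]\<close> shorter[of "[L, R]" Y] shorter[of X Y] shorter[of X "[L, R]"]
    show ?thesis
      using mod_equiv_swap_framed[of T L R Y X] by simp
  next
    case 2
    show ?thesis
      by (rule mod_equiv_swap_upper_lower[OF gen 2 shorter])
  next
    case 3
    have "mod_equiv T (F' @ G') (G' @ F')"
      if "balanced F'" "balanced G'" "length (F' @ G') < length (G @ F)" for F' G'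
      using shorter that by simp
    from mod_equiv_swap_upper_lower[OF gen 3(2,1) this] show ?thesis
      by (rule mod_equiv_sym)
  next
    case 4
    then obtain X Y where "F = L # X @ [R]" "G = L # Y @ [R]" "balanced X" "balanced Y"
      by (metis lower_prime_shape)
    with \<open>balanced [R, L]\<close> shorter[of "[R, L]" Y] shorter[of X Y] shorter[of X "[R, L]"]
    show ?thesis
      using mod_equiv_swap_framed[of T R L Y X] by simp
  qed
qed

lemma representatives_generate_swaps:
  assumes gen: "\<And>ups lam. ups \<in> Upsilon \<Longrightarrow> lam \<in> Lambda \<Longrightarrow> mod_equiv T (U ups @ D lam) (D lam @ U ups)"
  shows "balanced F \<Longrightarrow> balanced G \<Longrightarrow> mod_equiv T (F @ G) (G @ F)"
proof (induction "length (F @ G)" arbitrary: F G rule: less_induct)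
  case less
  have IH: "mod_equiv T (F' @ G') (G' @ F')"
    if "balanced F'" "balanced G'" "length (F' @ G') < length (F @ G)" for F' G'
    using less.hyps that by blast
  consider "F = [] \<or> G = []" | "\<not> prime_word F" "F \<noteq> []" | "\<not> prime_word G" "G \<noteq> []"
    | "prime_word F" "prime_word G"
    by blast
  then show ?case
  proof cases
    case 1
    then show ?thesis
      by (auto simp: mod_equiv_refl)
  next
    case 2
    then obtain F1 F2 where F: "F = F1 @ F2" "F1 \<noteq> []" "F2 \<noteq> []" "balanced F1" "balanced F2"
      using less.prems by (auto simp: prime_word_def)
    have "mod_equiv T (F2 @ G) (G @ F2)" "mod_equiv T (F1 @ G) (G @ F1)"
      using F less.prems by (auto intro!: IH)
    with F show ?thesis
      by (simp add: mod_equiv_swap_append)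
  next
    case 3
    then obtain G1 G2 where G: "G = G1 @ G2" "G1 \<noteq> []" "G2 \<noteq> []" "balanced G1" "balanced G2"
      using less.prems by (auto simp: prime_word_def)
    have "mod_equiv T (G2 @ F) (F @ G2)" "mod_equiv T (G1 @ F) (F @ G1)"
      using G less.prems by (auto intro!: IH)
    with G show ?thesis
      by (simp add: mod_equiv_sym mod_equiv_swap_append)
  next
    case 4
    from mod_equiv_swap_primes[OF gen this IH] show ?thesis .
  qed
qed

lemma rep_commutators_subset_S_set: "rep_commutators U D \<subseteq> S_set"
proof
  fix s assume "s \<in> rep_commutators U D"
  then obtain ups lam where "ups \<in> Upsilon" "lam \<in> Lambda"
    and s: "s = mon (U ups @ D lam) - mon (D lam @ U ups)"
    by (auto simp: rep_commutators_eq)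
  then have "upper_prime (U ups)" "lower_prime (D lam)"
    using upper_prime_rep lower_prime_rep by simp_all
  then show "s \<in> S_set"
    unfolding s by (intro S_set_swap) (simp_all add: upper_prime_iff lower_prime_iff)
qed

lemma gen_ideal_rep_commutators: "gen_ideal (rep_commutators U D) = J"
proof
  show "gen_ideal (rep_commutators U D) \<subseteq> J"
    unfolding J_def using rep_commutators_subset_S_set
    by (intro gen_ideal_minimal) (blast intro: gen_ideal.base)
  have gen: "mod_equiv (rep_commutators U D) (U ups @ D lam) (D lam @ U ups)"
    if "ups \<in> Upsilon" "lam \<in> Lambda" for ups lam
    unfolding mod_equiv_def by (rule gen_ideal.base) (use that in \<open>auto simp: rep_commutators_eq\<close>)
  have "S_set \<subseteq> gen_ideal (rep_commutators U D)"
  proof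
    fix s assume "s \<in> S_set"
    then obtain F G where "s = mon (F @ G) - mon (G @ F)" "balanced F" "balanced G"
      by (auto simp: S_set_def mon_append)
    with representatives_generate_swaps[OF gen] show "s \<in> gen_ideal (rep_commutators U D)"
      by (simp add: mod_equiv_def)
  qed
  then show "J \<subseteq> gen_ideal (rep_commutators U D)"
    unfolding J_def by (rule gen_ideal_minimal)
qed

lemma rep_commutators_other_pairs:
  assumes ups0: "ups0 \<in> Upsilon" and lam0: "lam0 \<in> Lambda"
  shows "rep_commutators U D - {mon (U ups0 @ D lam0) - mon (D lam0 @ U ups0)}
    \<subseteq> {mon (P @ Q) - mon (Q @ P) | P Q. upper_prime P \<and> lower_prime Q \<and> \<not> (P \<sim>\<^sub>J U ups0 \<and> Q \<sim>\<^sub>J D lam0)}"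
proof
  fix t assume t_in: "t \<in> rep_commutators U D - {mon (U ups0 @ D lam0) - mon (D lam0 @ U ups0)}"
  then obtain ups lam where ups: "ups \<in> Upsilon" and lam: "lam \<in> Lambda"
    and t: "t = mon (U ups @ D lam) - mon (D lam @ U ups)"
    by (auto simp: rep_commutators_eq)
  have "\<not> (U ups \<sim>\<^sub>J U ups0 \<and> D lam \<sim>\<^sub>J D lam0)"
  proof
    assume "U ups \<sim>\<^sub>J U ups0 \<and> D lam \<sim>\<^sub>J D lam0"
    then have "ups = ups0" "lam = lam0"
      using upper_prime_rep[OF ups] upper_prime_rep[OF ups0] lower_prime_rep[OF lam] lower_prime_rep[OF lam0]
        eq_class_eqI by metis+
    with t t_in show False
      by simp
  qed
  with t ups lam show "t \<in> {mon (P @ Q) - mon (Q @ P) | P Q.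
      upper_prime P \<and> lower_prime Q \<and> \<not> (P \<sim>\<^sub>J U ups0 \<and> Q \<sim>\<^sub>J D lam0)}"
    using upper_prime_rep lower_prime_rep by blast
qed

lemma rep_commutators_irredundant:
  assumes "T \<subset> rep_commutators U D"
  shows "gen_ideal T \<noteq> J"
proof
  obtain ups0 lam0 where ul0: "ups0 \<in> Upsilon" "lam0 \<in> Lambda"
    and missing: "mon (U ups0 @ D lam0) - mon (D lam0 @ U ups0) \<notin> T"
    using assms by (auto simp: rep_commutators_eq)
  with assms rep_commutators_other_pairs[OF ul0]
  have "\<not> mod_equiv T (U ups0 @ D lam0) (D lam0 @ U ups0)"
    using upper_prime_rep lower_prime_rep by (intro swap_not_generated_by_other_swaps) blast+
  moreover assume "gen_ideal T = J"
  moreover have "mon (U ups0 @ D lam0) - mon (D lam0 @ U ups0) \<in> J"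
    unfolding J_def using rep_commutators_subset_S_set ul0
    by (intro gen_ideal.base) (auto simp: rep_commutators_eq)
  ultimately show False
    by (simp add: mod_equiv_def)
qed

end

theorem theorem5p8:
  fixes U D :: "letter list set \<Rightarrow> letter list"
  assumes U_rep: "\<forall>ups\<in>Upsilon. U ups \<in> ups"
      and D_rep: "\<forall>lam\<in>Lambda. D lam \<in> lam"
  defines "S''' \<equiv> {mon (U ups) * mon (D lam) - mon (D lam) * mon (U ups) | ups lam.
                      ups \<in> Upsilon \<and> lam \<in> Lambda}"
  shows "S''' \<subseteq> S_set \<and> gen_ideal S''' = J \<and> (\<forall>T. T \<subset> S''' \<longrightarrow> gen_ideal T \<noteq> J)"
proof -
  have "S''' = rep_commutators U D"
    by (simp add: S'''_def rep_commutators_def)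
  then show ?thesis
    using rep_commutators_subset_S_set[OF U_rep D_rep] gen_ideal_rep_commutators[OF U_rep D_rep]
      rep_commutators_irredundant[OF U_rep D_rep] by simp
qed

end
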